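(* Let $f\in\mathcal{B}$ be such that $f\colon\mathbb{R}\to\mathbb{R}$ is convex, $f\colon\mathbb{D}\to f(\mathbb{D})$ is a quadratic-like map and $f(0)\in(-\infty,-1)$. Then $f\colon f^{-1}(\mathbb{D})\cap\mathbb{D}\to\mathbb{D}$ is an escaping quadratic-like map, and its periodic points coincide with those of $f\colon\mathbb{R}\to\mathbb{R}$.
   Context: $\mathcal{B}$ is the real Banach space of real and even entire maps $f$ (i.e. $f(\bar z)=\overline{f(z)}$, $f(-z)=f(z)$) such that the sequence $(f^{(j)}(0))_{j\ge0}$ is bounded, with norm $\|f\|_{\mathcal{B}}=\sup_{j\ge0}|f^{(j)}(0)|$. $\mathbb{D}$ is the open unit disk. A quadratic-like map is a holomorphic proper map $f\colon V\to W$ of degree $2$ with $V,W$ nonempty simply connected open subsets of $\mathbb{C}$ and $V$ relatively compact in $W$. An escaping quadratic-like map is a holomorphic covering map $f\colon U\to V$ of degree $2$, where $U,V$ are nonempty open subsets of $\mathbb{C}$ with $U$ relatively compact in $V$ and $V$ simply connected. For a map $f\colon U\to V$ with $U\subseteq V$, a periodic point is a point $z\in U$ with $f^{\circ n}(z)=z$ for some $n\ge1$ and $z,f(z),\dots,f^{\circ(n-1)}(z)\in U$. *)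

theory Defs
  imports "HOL-Complex_Analysis.Complex_Analysis"
begin

definition in_B :: "(complex \<Rightarrow> complex) \<Rightarrow> bool" where
  "in_B f \<longleftrightarrow> f holomorphic_on UNIV
     \<and> (\<forall>z. f (cnj z) = cnj (f z))
     \<and> (\<forall>z. f (- z) = f z)
     \<and> bounded (range (\<lambda>j. (deriv ^^ j) f 0))"

definition real_restr :: "(complex \<Rightarrow> complex) \<Rightarrow> real \<Rightarrow> real" where
  "real_restr f x = Re (f (complex_of_real x))"

definition proper_map_on :: "(complex \<Rightarrow> complex) \<Rightarrow> complex set \<Rightarrow> complex set \<Rightarrow> bool" where
  "proper_map_on f V W \<longleftrightarrow> f ` V \<subseteq> W \<and>
     (\<forall>K. compact K \<and> K \<subseteq> W \<longrightarrow> compact {z \<in> V. f z \<in> K})"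

definition degree_two_on :: "(complex \<Rightarrow> complex) \<Rightarrow> complex set \<Rightarrow> complex set \<Rightarrow> bool" where
  "degree_two_on f V W \<longleftrightarrow> (\<forall>w \<in> W. finite {z \<in> V. f z = w} \<and>
     (\<Sum>z \<in> {z \<in> V. f z = w}. zorder (\<lambda>u. f u - w) z) = 2)"

definition quadratic_like :: "(complex \<Rightarrow> complex) \<Rightarrow> complex set \<Rightarrow> complex set \<Rightarrow> bool" where
  "quadratic_like f V W \<longleftrightarrow>
     V \<noteq> {} \<and> W \<noteq> {} \<and> open V \<and> open W \<and> simply_connected V \<and> simply_connected W \<and>
     compact (closure V) \<and> closure V \<subseteq> W \<and>
     f holomorphic_on V \<and> proper_map_on f V W \<and> degree_two_on f V W"

definition escaping_quadratic_like :: "(complex \<Rightarrow> complex) \<Rightarrow> complex set \<Rightarrow> complex set \<Rightarrow> bool" where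
  "escaping_quadratic_like f U V \<longleftrightarrow>
     U \<noteq> {} \<and> V \<noteq> {} \<and> open U \<and> open V \<and> simply_connected V \<and>
     compact (closure U) \<and> closure U \<subseteq> V \<and>
     f holomorphic_on U \<and> covering_space U f V \<and>
     (\<forall>w \<in> V. card {z \<in> U. f z = w} = 2)"

definition periodic_point :: "('a \<Rightarrow> 'a) \<Rightarrow> 'a set \<Rightarrow> 'a \<Rightarrow> bool" where
  "periodic_point f U z \<longleftrightarrow>
     z \<in> U \<and> (\<exists>n \<ge> 1. (f ^^ n) z = z \<and> (\<forall>k < n. (f ^^ k) z \<in> U))"

end

(* Since f is even and real on the real axis, it is real on both axes. A degree-two map of the
   disk has no three preimages of a point, which forces Re f \<le> c < -1 on the imaginary diameter
   and makes the preimages of 1 real. Hence U = f^-1(D) \<inter> D misses the imaginary axis and splits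
   into the half-planes Re z > 0 and Re z < 0, each mapped biholomorphically onto D.

   By convexity, g = f|R satisfies g x > |x| for |x| \<ge> 1, so real periodic orbits stay in (-1,1)
   and lie in U. Conversely, a periodic point z in U and its conjugate follow the same itinerary
   through the two half-planes; composing the inverse branches along it gives a holomorphic self-map
   of D with relatively compact image fixing both points, so by the Schwarz lemma z = cnj z. *)

theory Submission
  imports Defs
begin

lemma compact_subset_ball_shrink:
  fixes K :: "'a::real_normed_vector set"
  assumes "compact K" "K \<subseteq> ball 0 1"
  obtains s where "s < 1" "K \<subseteq> ball 0 s"
proof (cases "K = {}")
  case False
  then obtain x where x: "x \<in> K" and max: "\<And>y. y \<in> K \<Longrightarrow> norm y \<le> norm x"
    using continuous_attains_sup[OF assms(1) False continuous_on_norm_id] by blast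
  have "norm x < 1" using x assms(2) by auto
  then show ?thesis
    by (intro that[of "(1 + norm x) / 2"]) (auto dest: max)
qed (use that[of 0] in simp)

lemma fixpoint_eq_0_of_shrinking_self_map:
  fixes G :: "complex \<Rightarrow> complex"
  assumes "G holomorphic_on ball 0 1" "G 0 = 0" "G ` ball 0 1 \<subseteq> ball 0 s" "s < 1"
    and "q \<in> ball 0 1" "G q = q"
  shows "q = 0"
proof -
  have "G 0 \<in> ball 0 s" using assms(3) by (simp add: image_subset_iff)
  then have "s > 0" using assms(2) by simp
  have "norm (G q / of_real s) \<le> norm q"
  proof (rule Schwarz_Lemma(1)[of "\<lambda>z. G z / of_real s" q])
    show "(\<lambda>z. G z / of_real s) holomorphic_on ball 0 1"
      using assms(1) \<open>s > 0\<close> by (intro holomorphic_intros) auto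
    show "norm (G z / of_real s) < 1" if "norm z < 1" for z
      using assms(3) that \<open>s > 0\<close> by (auto simp: norm_divide image_subset_iff)
  qed (use assms(2,5) in auto)
  then have "norm q \<le> s * norm q"
    using \<open>s > 0\<close> assms(6) by (simp add: norm_divide divide_le_eq mult.commute)
  then have "(1 - s) * norm q \<le> 0"
    by (simp add: algebra_simps)
  then show "q = 0"
    using \<open>s < 1\<close> by (simp add: mult_le_0_iff)
qed

text \<open>Conjugating by the Moebius map sending \<open>p\<close> to 0 reduces this to the Schwarz lemma.\<close>
lemma holomorphic_self_map_fixpoint_unique:
  fixes G :: "complex \<Rightarrow> complex"
  assumes holG: "G holomorphic_on ball 0 1" and K: "compact K" "K \<subseteq> ball 0 1"
    and GK: "G ` ball 0 1 \<subseteq> K" and p: "p \<in> ball 0 1" and q: "q \<in> ball 0 1"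
    and Gp: "G p = p" and Gq: "G q = q"
  shows "p = q"
proof -
  define M where "M = Moebius_function 0 p"
  define Mi where "Mi = Moebius_function 0 (-p)"
  have "norm p < 1" using p by simp
  have M_ball: "M z \<in> ball 0 1" and Mi_ball: "Mi z \<in> ball 0 1" if "z \<in> ball 0 1" for z
    using Moebius_function_norm_lt_1[of p z 0] Moebius_function_norm_lt_1[of "-p" z 0]
      \<open>norm p < 1\<close> that by (auto simp: M_def Mi_def)
  have Mi_M: "Mi (M z) = z" if "z \<in> ball 0 1" for z
    unfolding Mi_def M_def by (rule Moebius_function_compose) (use \<open>norm p < 1\<close> that in auto)
  have holM: "M holomorphic_on ball 0 1" and holMi: "Mi holomorphic_on ball 0 1"
    unfolding M_def Mi_def using \<open>norm p < 1\<close> by (auto intro: Moebius_function_holomorphic)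
  have "compact (M ` K)"
    using holM K by (intro compact_continuous_image holomorphic_on_imp_continuous_on) auto
  moreover have "M ` K \<subseteq> ball 0 1" using K(2) M_ball by auto
  ultimately obtain s where s: "s < 1" "M ` K \<subseteq> ball 0 s"
    by (rule compact_subset_ball_shrink)
  define G' where "G' = M \<circ> (G \<circ> Mi)"
  have "M q = 0"
  proof (rule fixpoint_eq_0_of_shrinking_self_map)
    show "G' holomorphic_on ball 0 1"
    proof -
      have "Mi ` ball 0 1 \<subseteq> ball 0 1" "(G \<circ> Mi) ` ball 0 1 \<subseteq> ball 0 1"
        using GK K(2) Mi_ball by (fastforce simp del: mem_ball_0)+
      then show ?thesis
        unfolding G'_def
        by (intro holomorphic_on_compose_gen[OF holomorphic_on_compose_gen[OF holMi holG] holM])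
    qed
    show "G' 0 = 0" by (simp add: G'_def Mi_def M_def Moebius_function_of_zero Moebius_function_eq_zero Gp)
    have "G' ` ball 0 1 \<subseteq> M ` K"
      unfolding G'_def image_subset_iff comp_def using GK Mi_ball by blast
    then show "G' ` ball 0 1 \<subseteq> ball 0 s" using s(2) by blast
    show "G' (M q) = M q" by (simp add: G'_def Mi_M[OF q] Gq)
  qed (use s M_ball q in auto)
  then show ?thesis
    using Mi_M[OF q] by (simp add: Mi_def Moebius_function_of_zero)
qed

lemma zorder_preimage_pos:
  fixes f :: "complex \<Rightarrow> complex"
  assumes hol: "f holomorphic_on UNIV" and nonconst: "f a \<noteq> f b" and "f z = w"
  shows "zorder (\<lambda>u. f u - w) z > 0"
proof -
  have hol_w: "(\<lambda>u. f u - w) holomorphic_on UNIV"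
    using hol by (intro holomorphic_intros)
  have "frequently (\<lambda>u. f u - w \<noteq> 0) (at z)"
  proof (rule ccontr)
    assume "\<not> ?thesis"
    then have "eventually (\<lambda>u. f u - w = 0) (at z)"
      by (simp add: not_frequently)
    then have "frequently (\<lambda>u. f u - w = 0) (at z)"
      by (simp add: eventually_frequently)
    then have limpt: "z islimpt {u. f u - w = 0}"
      by (simp add: islimpt_iff_eventually frequently_def)
    have "f u - w = 0" for u
      by (rule analytic_continuation[OF hol_w _ _ _ _ limpt]) auto
    then show False using nonconst by (metis eq_iff_diff_eq_0)
  qed
  then show ?thesis
    using zorder_pos_iff[OF hol_w] assms(3) by simp
qed

lemma degree_two_on_fibre_card_le:
  fixes f :: "complex \<Rightarrow> complex"
  assumes "f holomorphic_on UNIV" "f a \<noteq> f b" "degree_two_on f V W" "w \<in> W"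
  shows "card {z \<in> V. f z = w} \<le> 2"
proof -
  let ?F = "{z \<in> V. f z = w}"
  have sum: "(\<Sum>z \<in> ?F. zorder (\<lambda>u. f u - w) z) = 2"
    using assms(3,4) unfolding degree_two_on_def by blast
  have "int (card ?F) = (\<Sum>z \<in> ?F. 1)" by simp
  also have "\<dots> \<le> (\<Sum>z \<in> ?F. zorder (\<lambda>u. f u - w) z)"
  proof (rule sum_mono)
    fix z assume "z \<in> ?F"
    then show "1 \<le> zorder (\<lambda>u. f u - w) z"
      using zorder_preimage_pos[OF assms(1,2), of z w] by simp
  qed
  finally show ?thesis using sum by simp
qed

lemma convex_even_ge_value_at_0:
  fixes g :: "real \<Rightarrow> real"
  assumes "convex_on UNIV g" "\<And>x. g (- x) = g x"
  shows "g 0 \<le> g x"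
  using convex_onD[OF assms(1), of "1/2" x "-x"] assms(2)[of x] by simp

text \<open>The chord from \<open>(0, g 0)\<close> to \<open>(y, g y)\<close> passes above \<open>(a, 1)\<close>, so \<open>g y \<ge> y / a\<close>.\<close>
lemma convex_gt_identity:
  fixes g :: "real \<Rightarrow> real"
  assumes "convex_on UNIV g" "g 0 \<le> 0" "0 < a" "a < 1" "g a = 1" "a \<le> y"
  shows "y < g y"
proof -
  define t where "t = a / y"
  have "y > 0" "0 \<le> t" "t \<le> 1" using assms(3,6) by (auto simp: t_def)
  have "g a = g ((1 - t) *\<^sub>R 0 + t *\<^sub>R y)" using \<open>y > 0\<close> by (simp add: t_def)
  also have "\<dots> \<le> (1 - t) * g 0 + t * g y"
    using \<open>0 \<le> t\<close> \<open>t \<le> 1\<close> by (intro convex_onD[OF assms(1)]) auto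
  also have "\<dots> \<le> t * g y" using assms(2) \<open>t \<le> 1\<close> by (simp add: mult_nonneg_nonpos)
  finally have "y \<le> a * g y" using assms(5) \<open>y > 0\<close> by (simp add: t_def field_simps)
  moreover have "0 < g y"
    using zero_less_mult_pos[of a "g y"] \<open>y \<le> a * g y\<close> \<open>y > 0\<close> assms(3) by simp
  ultimately show ?thesis
    using mult_strict_right_mono[OF assms(4), of "g y"] by linarith
qed

lemma funpow_abs_gt:
  fixes g :: "real \<Rightarrow> real"
  assumes grow: "\<And>y. 1 \<le> \<bar>y\<bar> \<Longrightarrow> \<bar>y\<bar> < \<bar>g y\<bar>" and "1 \<le> \<bar>y\<bar>"
  shows "\<bar>y\<bar> < \<bar>(g ^^ Suc m) y\<bar>"
proof (induction m)
  case (Suc m)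
  then show ?case using grow[of "(g ^^ Suc m) y"] assms(2) by simp
qed (use assms in simp)

lemma periodic_orbit_in_unit_interval:
  fixes g :: "real \<Rightarrow> real"
  assumes grow: "\<And>y. 1 \<le> \<bar>y\<bar> \<Longrightarrow> \<bar>y\<bar> < \<bar>g y\<bar>" and "periodic_point g UNIV x"
  shows "\<bar>(g ^^ k) x\<bar> < 1"
proof (rule ccontr)
  assume escaped: "\<not> \<bar>(g ^^ k) x\<bar> < 1"
  obtain n where "n \<ge> 1" and per: "(g ^^ n) x = x"
    using assms(2) unfolding periodic_point_def by blast
  then obtain m where n: "n = Suc m" by (cases n) auto
  have "(g ^^ n) ((g ^^ k) x) = (g ^^ (n + k)) x" by (simp add: funpow_add)
  also have "\<dots> = (g ^^ k) ((g ^^ n) x)" by (simp only: add.commute[of n k] funpow_add comp_apply)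
  finally have "(g ^^ Suc m) ((g ^^ k) x) = (g ^^ k) x" using per n by simp
  then show False using funpow_abs_gt[OF grow, of "(g ^^ k) x" m] escaped by simp
qed

lemma IVT_positive_point:
  fixes h :: "real \<Rightarrow> real"
  assumes "continuous_on {0..a} h" "0 \<le> a" "h 0 < v" "v \<le> h a"
  obtains s where "0 < s" "s \<le> a" "h s = v"
proof -
  obtain s where "0 \<le> s" "s \<le> a" "h s = v"
    using IVT'[of h 0 v a] assms by force
  moreover have "s \<noteq> 0" using calculation assms(3) by auto
  ultimately show ?thesis by (intro that[of s]) auto
qed

locale real_even_quadratic_like =
  fixes f :: "complex \<Rightarrow> complex" and c :: real
  assumes holomorphic: "f holomorphic_on UNIV"
    and f_cnj: "\<And>z. f (cnj z) = cnj (f z)"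
    and f_even: "\<And>z. f (- z) = f z"
    and convex: "convex_on UNIV (real_restr f)"
    and quadratic_like: "quadratic_like f (ball 0 1) (f ` ball 0 1)"
    and f_0: "f 0 = of_real c" and c_less: "c < -1"
begin

lemma cball_subset_image: "cball 0 1 \<subseteq> f ` ball 0 1"
  using quadratic_like unfolding quadratic_like_def by simp

lemma continuous_on_f: "continuous_on S f"
  using holomorphic holomorphic_on_imp_continuous_on holomorphic_on_subset by blast

lemma f_of_real: "f (of_real x) = of_real (real_restr f x)"
proof -
  have "cnj (f (of_real x)) = f (of_real x)" using f_cnj[of "of_real x"] by simp
  then show ?thesis unfolding real_restr_def by (metis Reals_cnj_iff of_real_Re)
qed

lemma f_imaginary_real: "f (\<i> * of_real t) = of_real (Re (f (\<i> * of_real t)))"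
proof -
  have "cnj (f (\<i> * of_real t)) = f (\<i> * of_real t)"
    using f_cnj[of "\<i> * of_real t"] f_even[of "\<i> * of_real t"] by simp
  then show ?thesis by (metis Reals_cnj_iff of_real_Re)
qed

lemma real_restr_0: "real_restr f 0 = c"
  using f_0 by (simp add: real_restr_def)

lemma real_restr_even: "real_restr f (- x) = real_restr f x"
  using f_even[of "of_real x"] by (simp add: real_restr_def)

lemma three_preimages_not_distinct:
  assumes "a \<in> ball 0 1" "b \<in> ball 0 1" "e \<in> ball 0 1" "f a = f e" "f b = f e"
  shows "a = b \<or> a = e \<or> b = e"
proof (rule ccontr)
  assume distinct: "\<not> ?thesis"
  have "1 \<in> f ` ball 0 1" using cball_subset_image by auto
  then obtain z where "z \<in> ball 0 1" "f z = 1" by auto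
  then have nonconst: "f z \<noteq> f 0" using f_0 c_less by auto
  have deg: "degree_two_on f (ball 0 1) (f ` ball 0 1)"
    using quadratic_like unfolding quadratic_like_def by blast
  let ?F = "{u \<in> ball 0 1. f u = f e}"
  have "finite ?F" using deg assms(3) unfolding degree_two_on_def by blast
  moreover have "{a, b, e} \<subseteq> ?F" using assms by auto
  ultimately have "card {a, b, e} \<le> card ?F" by (rule card_mono)
  also have "\<dots> \<le> 2" using degree_two_on_fibre_card_le[OF holomorphic nonconst deg] assms(3) by blast
  finally show False using distinct by auto
qed

lemma fibre_eq_pm:
  assumes "z \<in> ball 0 1" "z \<noteq> 0" "u \<in> ball 0 1" "f u = f z"
  shows "u = z \<or> u = - z"
proof -
  have "- z \<in> ball 0 1" "f u = f (- z)" "f z = f (- z)" using assms f_even[of z] by simp_all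
  moreover have "z \<noteq> - z" using assms(2) by (simp add: complex_eq_iff)
  ultimately show ?thesis
    using three_preimages_not_distinct[OF assms(3,1)] by metis
qed

lemma real_restr_ge_c: "c \<le> real_restr f x"
  using convex_even_ge_value_at_0[of "real_restr f", OF convex real_restr_even] real_restr_0 by simp

lemma real_restr_gt_c:
  assumes "x \<noteq> 0" "\<bar>x\<bar> < 1"
  shows "c < real_restr f x"
proof (rule ccontr)
  assume "\<not> ?thesis"
  then have "f (of_real x) = f 0" using real_restr_ge_c[of x] f_of_real[of x] f_0 by simp
  then show False
    using three_preimages_not_distinct[of "of_real x" "- of_real x" 0] f_even[of "of_real x"] assms
    by auto
qed

text \<open>If \<open>Re f\<close> exceeded \<open>c\<close> somewhere on the imaginary axis, then by continuity some value
  slightly above \<open>c\<close> would be taken at \<open>\<plusminus>x\<close> on the real axis and at a point of the imaginary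
  axis: three preimages.\<close>
lemma Re_f_imaginary_le:
  assumes "\<bar>t\<bar> < 1"
  shows "Re (f (\<i> * of_real t)) \<le> c"
proof -
  define \<phi> where "\<phi> s = Re (f (\<i> * of_real s))" for s
  have "\<phi> \<bar>t\<bar> = \<phi> t" using f_even[of "\<i> * of_real t"] by (simp add: \<phi>_def abs_real_def)
  moreover have "\<phi> \<bar>t\<bar> \<le> c"
  proof (rule ccontr)
    assume "\<not> \<phi> \<bar>t\<bar> \<le> c"
    define v where "v = min (\<phi> \<bar>t\<bar>) (real_restr f (1/2))"
    have "c < v" using \<open>\<not> \<phi> \<bar>t\<bar> \<le> c\<close> real_restr_gt_c[of "1/2"] by (simp add: v_def)
    have "continuous_on {0..\<bar>t\<bar>} \<phi>" "continuous_on {0..1/2} (real_restr f)"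
      unfolding \<phi>_def real_restr_def
      by (intro continuous_intros continuous_on_compose2[OF continuous_on_f[of UNIV]]; simp)+
    moreover have "\<phi> 0 < v" "v \<le> \<phi> \<bar>t\<bar>" "real_restr f 0 < v" "v \<le> real_restr f (1/2)"
      using \<open>c < v\<close> f_0 real_restr_0 by (simp_all add: \<phi>_def v_def)
    ultimately obtain s x where s: "0 < s" "s \<le> \<bar>t\<bar>" "\<phi> s = v"
      and x: "0 < x" "x \<le> 1/2" "real_restr f x = v"
      by (metis IVT_positive_point abs_ge_zero half_gt_zero_iff less_eq_real_def zero_less_one)
    have "f (of_real x) = f (\<i> * of_real s)" "f (- of_real x) = f (\<i> * of_real s)"
      using f_of_real[of x] f_imaginary_real[of s] f_even[of "of_real x"] s(3) x(3) by (simp_all add: \<phi>_def)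
    moreover have "\<i> * of_real s \<in> ball 0 1" using s assms by (simp add: norm_mult)
    ultimately show False
      using three_preimages_not_distinct[of "of_real x" "- of_real x" "\<i> * of_real s"] s x
      by (auto simp: complex_eq_iff)
  qed
  ultimately show ?thesis by (simp add: \<phi>_def)
qed

lemma Re_nonzero_if_image_in_cball:
  assumes "z \<in> ball 0 1" "f z \<in> cball 0 1"
  shows "Re z \<noteq> 0"
proof
  assume "Re z = 0"
  then have z: "z = \<i> * of_real (Im z)" by (simp add: complex_eq_iff)
  have "\<bar>Im z\<bar> < 1" using assms(1) abs_Im_le_cmod[of z] by simp
  then have "Re (f z) < -1" using Re_f_imaginary_le[of "Im z"] c_less z by simp
  then show False using assms(2) abs_Re_le_cmod[of "f z"] by simp
qed

lemma real_preimage_of_1: "\<exists>a. 0 < a \<and> a < 1 \<and> real_restr f a = 1"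
proof -
  have "1 \<in> f ` ball 0 1" using cball_subset_image by auto
  then obtain z where z: "z \<in> ball 0 1" "f z = 1" by auto
  have "z \<noteq> 0" using z f_0 c_less by auto
  have "Re z \<noteq> 0" using Re_nonzero_if_image_in_cball z by simp
  have "cnj z = z \<or> cnj z = - z"
    using fibre_eq_pm[OF z(1) \<open>z \<noteq> 0\<close>, of "cnj z"] z f_cnj[of z] by simp
  then have "z = of_real (Re z)"
    using \<open>Re z \<noteq> 0\<close> by (auto simp: complex_eq_iff)
  then have "real_restr f \<bar>Re z\<bar> = 1"
    using z(2) f_of_real[of "Re z"] real_restr_even[of "Re z"] by (auto simp: abs_real_def)
  moreover have "\<bar>Re z\<bar> < 1" using z(1) abs_Re_le_cmod[of z] by simp
  ultimately show ?thesis using \<open>Re z \<noteq> 0\<close> by (intro exI[of _ "\<bar>Re z\<bar>"]) simp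
qed

lemma real_restr_escape:
  assumes "1 \<le> \<bar>x\<bar>"
  shows "\<bar>x\<bar> < real_restr f x"
proof -
  obtain a where "0 < a" "a < 1" "real_restr f a = 1" using real_preimage_of_1 by blast
  then have "\<bar>x\<bar> < real_restr f \<bar>x\<bar>"
    using real_restr_0 c_less assms by (intro convex_gt_identity[OF convex, of a "\<bar>x\<bar>"]) auto
  then show ?thesis using real_restr_even[of x] by (simp add: abs_real_def split: if_splits)
qed

definition U :: "complex set" where "U = f -` ball 0 1 \<inter> ball 0 1"

lemma U_subset_ball: "U \<subseteq> ball 0 1"
  unfolding U_def by blast

lemma open_U: "open U"
  unfolding U_def using continuous_on_f[of UNIV] by (intro open_Int open_vimage) auto

lemma U_nonempty: "U \<noteq> {}"
proof -
  have "0 \<in> f ` ball 0 1" using cball_subset_image by auto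
  then obtain z where "z \<in> ball 0 1" "f z = 0" by auto
  then have "z \<in> U" unfolding U_def by simp
  then show ?thesis by blast
qed

lemma closure_U: "compact (closure U)" "closure U \<subseteq> ball 0 1"
proof -
  define K where "K = {z \<in> ball 0 1. f z \<in> cball 0 1}"
  have "proper_map_on f (ball 0 1) (f ` ball 0 1)"
    using quadratic_like unfolding quadratic_like_def by blast
  then have "compact K"
    unfolding proper_map_on_def K_def using cball_subset_image compact_cball[of 0 1]
    by (elim conjE allE[of _ "cball 0 1"]) simp
  moreover have "U \<subseteq> K" unfolding U_def K_def by auto
  ultimately have "closure U \<subseteq> K" by (simp add: closure_minimal compact_imp_closed)
  then show "closure U \<subseteq> ball 0 1" unfolding K_def by blast
  show "compact (closure U)"
    using U_subset_ball by (meson bounded_ball bounded_subset compact_closure)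
qed

lemma Re_nonzero_U: "z \<in> U \<Longrightarrow> Re z \<noteq> 0"
  unfolding U_def using Re_nonzero_if_image_in_cball by auto

lemma cnj_in_U: "z \<in> U \<Longrightarrow> cnj z \<in> U"
  unfolding U_def using f_cnj[of z] by auto

lemma uminus_in_U: "z \<in> U \<Longrightarrow> - z \<in> U"
  unfolding U_def using f_even[of z] by auto

lemma fibre_U:
  assumes "w \<in> ball 0 1"
  obtains z where "{u \<in> U. f u = w} = {z, - z}" "z \<noteq> - z"
proof -
  have "w \<in> f ` ball 0 1" using assms cball_subset_image by auto
  then obtain z where z: "z \<in> ball 0 1" "f z = w" by auto
  then have "z \<in> U" using assms unfolding U_def by simp
  have "z \<noteq> 0" using z assms f_0 c_less by auto
  have "u = z \<or> u = - z" if "u \<in> U" "f u = w" for u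
    using fibre_eq_pm[OF z(1) \<open>z \<noteq> 0\<close>, of u] subsetD[OF U_subset_ball that(1)] that(2) z(2) by simp
  then have "{u \<in> U. f u = w} = {z, - z}"
    using z(2) \<open>z \<in> U\<close> uminus_in_U f_even[of z] by auto
  moreover have "z \<noteq> - z" using \<open>z \<noteq> 0\<close> by (simp add: complex_eq_iff)
  ultimately show ?thesis by (rule that)
qed

lemma card_fibre_U: "w \<in> ball 0 1 \<Longrightarrow> card {z \<in> U. f z = w} = 2"
  by (metis fibre_U card_2_iff)

text \<open>The two sheets of the covering: \<open>U\<close> avoids the imaginary axis, and \<open>z \<mapsto> -z\<close> swaps them.\<close>
definition half :: "bool \<Rightarrow> complex set" where "half b = {z \<in> U. 0 < Re z \<longleftrightarrow> b}"

lemma half_subset_U: "half b \<subseteq> U"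
  unfolding half_def by blast

lemma in_half_Re: "z \<in> U \<Longrightarrow> z \<in> half (0 < Re z)"
  unfolding half_def by blast

lemma open_half: "open (half b)"
proof -
  have "half b = U \<inter> (if b then {z. 0 < Re z} else {z. Re z < 0})"
    using Re_nonzero_U unfolding half_def by (auto simp: linorder_neq_iff)
  then show ?thesis
    using open_U by (simp add: open_Int open_halfspace_Re_gt open_halfspace_Re_lt)
qed

lemma inj_on_half: "inj_on f (half b)"
proof (rule inj_onI)
  fix x y assume xy: "x \<in> half b" "y \<in> half b" "f x = f y"
  then have "x \<in> U" "y \<in> U" using half_subset_U by auto
  then have "y = x \<or> y = - x"
    using fibre_eq_pm[of x y] xy(3) Re_nonzero_U U_subset_ball by force
  moreover have "y \<noteq> - x" using xy(1,2) Re_nonzero_U[OF \<open>x \<in> U\<close>] unfolding half_def by auto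
  ultimately show "x = y" by simp
qed

lemma image_half: "f ` half b = ball 0 1"
proof
  show "f ` half b \<subseteq> ball 0 1" using half_subset_U unfolding U_def by auto
  show "ball 0 1 \<subseteq> f ` half b"
  proof
    fix w :: complex assume "w \<in> ball 0 1"
    then obtain z where z: "{u \<in> U. f u = w} = {z, - z}" by (rule fibre_U)
    then have "z \<in> U" "- z \<in> U" "f z = w" "f (- z) = w" by auto
    moreover have "z \<in> half b \<or> - z \<in> half b"
      using calculation(1,2) Re_nonzero_U[of z] unfolding half_def by auto
    ultimately show "w \<in> f ` half b" by (metis image_eqI)
  qed
qed

definition branch :: "bool \<Rightarrow> complex \<Rightarrow> complex" where "branch b = inv_into (half b) f"

lemma branch_f: "z \<in> half b \<Longrightarrow> branch b (f z) = z"
  unfolding branch_def by (rule inv_into_f_f[OF inj_on_half])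

lemma f_branch: "w \<in> ball 0 1 \<Longrightarrow> f (branch b w) = w"
  unfolding branch_def by (rule f_inv_into_f) (simp add: image_half)

lemma branch_in_half: "w \<in> ball 0 1 \<Longrightarrow> branch b w \<in> half b"
  unfolding branch_def by (rule inv_into_into) (simp add: image_half)

lemma branch_in_U: "w \<in> ball 0 1 \<Longrightarrow> branch b w \<in> U"
  using branch_in_half half_subset_U by blast

lemma branch_in_ball: "w \<in> ball 0 1 \<Longrightarrow> branch b w \<in> ball 0 1"
  using branch_in_U U_subset_ball by blast

lemma holomorphic_branch: "branch b holomorphic_on ball 0 1"
proof -
  obtain g where hol_g: "g holomorphic_on f ` half b" and g: "\<And>z. z \<in> half b \<Longrightarrow> g (f z) = z"
    using holomorphic_has_inverse[OF holomorphic_on_subset[OF holomorphic] open_half inj_on_half]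
    by blast
  have "branch b holomorphic_on f ` half b"
    by (rule holomorphic_transform[OF hol_g]) (use g branch_f in auto)
  then show ?thesis by (simp add: image_half)
qed

lemma homeomorphism_half: "homeomorphism (half b) (ball 0 1) f (branch b)"
proof (rule homeomorphismI)
  show "continuous_on (ball 0 1) (branch b)"
    by (rule holomorphic_on_imp_continuous_on[OF holomorphic_branch])
  show "branch b ` ball 0 1 \<subseteq> half b" using branch_in_half by blast
qed (use continuous_on_f image_half branch_f f_branch in auto)

lemma covering_space_U: "covering_space U f (ball 0 1)"
proof -
  let ?sheets = "{half True, half False}"
  have U_eq: "U = half True \<union> half False" unfolding half_def by auto
  have "f ` U = ball 0 1" using image_half[of True] U_eq unfolding U_def by auto
  moreover have "\<Union> ?sheets = U \<inter> f -` ball 0 1" using U_eq unfolding U_def by auto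
  moreover have "\<forall>S\<in>?sheets. openin (top_of_set U) S"
    using open_half half_subset_U by (auto intro: open_subset)
  moreover have "pairwise disjnt ?sheets"
    by (auto simp: pairwise_insert disjnt_def half_def)
  moreover have "\<forall>S\<in>?sheets. \<exists>g. homeomorphism S (ball 0 1) f g"
    using homeomorphism_half by blast
  ultimately show ?thesis
    unfolding covering_space_def using continuous_on_f
    by (intro conjI ballI exI[of _ "ball 0 1"] exI[of _ ?sheets]) auto
qed

lemma funpow_of_real: "(f ^^ k) (of_real x) = of_real ((real_restr f ^^ k) x)"
  by (induction k) (simp_all add: f_of_real)

lemma funpow_cnj: "(f ^^ k) (cnj z) = cnj ((f ^^ k) z)"
  by (induction k) (simp_all add: f_cnj)

lemma periodic_point_of_real:
  assumes "periodic_point (real_restr f) UNIV x"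
  shows "periodic_point f U (of_real x)"
proof -
  have orbit: "\<bar>(real_restr f ^^ k) x\<bar> < 1" for k
    using periodic_orbit_in_unit_interval[OF _ assms] real_restr_escape by fastforce
  have "(f ^^ k) (of_real x) \<in> U" for k
    using orbit[of k] orbit[of "Suc k"] unfolding U_def by (simp add: funpow_of_real f_of_real)
  moreover obtain n where "n \<ge> 1" "(real_restr f ^^ n) x = x"
    using assms unfolding periodic_point_def by blast
  ultimately show ?thesis
    unfolding periodic_point_def by (metis funpow_0 funpow_of_real)
qed

lemma inverse_branch_along_itinerary:
  assumes "\<And>k. k \<le> m \<Longrightarrow> (f ^^ k) z \<in> half (s k)" "\<And>k. k \<le> m \<Longrightarrow> (f ^^ k) w \<in> half (s k)"
  shows "\<exists>R. R holomorphic_on ball 0 1 \<and> R ` ball 0 1 \<subseteq> U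
    \<and> R ((f ^^ Suc m) z) = z \<and> R ((f ^^ Suc m) w) = w"
  using assms
proof (induction m)
  case 0
  then have "branch (s 0) (f z) = z" "branch (s 0) (f w) = w" using branch_f by fastforce+
  moreover have "branch (s 0) ` ball 0 1 \<subseteq> U" using branch_in_U by blast
  ultimately show ?case using holomorphic_branch by (intro exI[of _ "branch (s 0)"]) simp
next
  case (Suc m)
  have "\<exists>R. R holomorphic_on ball 0 1 \<and> R ` ball 0 1 \<subseteq> U
    \<and> R ((f ^^ Suc m) z) = z \<and> R ((f ^^ Suc m) w) = w"
    using Suc.prems by (intro Suc.IH) simp_all
  then obtain R where R: "R holomorphic_on ball 0 1" "R ` ball 0 1 \<subseteq> U"
    "R ((f ^^ Suc m) z) = z" "R ((f ^^ Suc m) w) = w" by blast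
  let ?R = "R \<circ> branch (s (Suc m))"
  have "?R holomorphic_on ball 0 1"
    by (rule holomorphic_on_compose_gen[OF holomorphic_branch R(1)]) (use branch_in_ball in blast)
  moreover have "?R ` ball 0 1 \<subseteq> U" using R(2) branch_in_ball by (fastforce simp del: mem_ball_0)
  moreover have "?R ((f ^^ Suc (Suc m)) z) = z" "?R ((f ^^ Suc (Suc m)) w) = w"
    using branch_f[OF Suc.prems(1)[of "Suc m"]] branch_f[OF Suc.prems(2)[of "Suc m"]] R(3,4) by simp_all
  ultimately show ?case by (intro exI[of _ ?R]) (simp add: comp_def)
qed

text \<open>Pulling back along the common itinerary gives a holomorphic self-map of the disk with
  relatively compact image that fixes both points.\<close>
lemma periodic_points_eq_if_same_itinerary:
  assumes "n \<ge> 1" "(f ^^ n) z = z" "(f ^^ n) w = w"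
    and "\<And>k. k < n \<Longrightarrow> (f ^^ k) z \<in> half (s k)" "\<And>k. k < n \<Longrightarrow> (f ^^ k) w \<in> half (s k)"
  shows "z = w"
proof -
  obtain m where n: "n = Suc m" using assms(1) by (cases n) auto
  have "\<exists>R. R holomorphic_on ball 0 1 \<and> R ` ball 0 1 \<subseteq> U
    \<and> R ((f ^^ Suc m) z) = z \<and> R ((f ^^ Suc m) w) = w"
    using assms(4,5) n by (intro inverse_branch_along_itinerary[of m z s w]) simp_all
  then obtain R where R: "R holomorphic_on ball 0 1" "R ` ball 0 1 \<subseteq> U" "R z = z" "R w = w"
    using assms(2,3) n by auto
  have "z \<in> U" "w \<in> U" using assms(4,5)[of 0] n half_subset_U by auto
  then have "z \<in> ball 0 1" "w \<in> ball 0 1" using U_subset_ball by (meson subsetD)+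
  moreover have "R ` ball 0 1 \<subseteq> closure U" using R(2) closure_subset by (rule order_trans)
  ultimately show ?thesis
    using holomorphic_self_map_fixpoint_unique[OF R(1) closure_U] R(3,4) by simp
qed

lemma periodic_point_U_imp_real:
  assumes "periodic_point f U z"
  shows "z \<in> of_real ` {x. periodic_point (real_restr f) UNIV x}"
proof -
  obtain n where n: "n \<ge> 1" "(f ^^ n) z = z" "\<And>k. k < n \<Longrightarrow> (f ^^ k) z \<in> U"
    using assms unfolding periodic_point_def by blast
  define s where "s k = (0 < Re ((f ^^ k) z))" for k
  have "(f ^^ k) z \<in> half (s k)" "(f ^^ k) (cnj z) \<in> half (s k)" if "k < n" for k
    using in_half_Re[OF n(3)[OF that]] cnj_in_U[OF n(3)[OF that]]
    unfolding s_def half_def funpow_cnj by auto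
  moreover have "(f ^^ n) (cnj z) = cnj z" using n(2) by (simp add: funpow_cnj)
  ultimately have "z = cnj z"
    using periodic_points_eq_if_same_itinerary[OF n(1) n(2)] by blast
  then have z: "z = of_real (Re z)" by (metis Reals_cnj_iff of_real_Re)
  then have "(real_restr f ^^ n) (Re z) = Re z"
    using n(2) funpow_of_real[of n "Re z"] by (metis of_real_eq_iff)
  then have "periodic_point (real_restr f) UNIV (Re z)"
    using n(1) unfolding periodic_point_def by blast
  then show ?thesis using z by blast
qed

lemma escaping_quadratic_like_U: "escaping_quadratic_like f U (ball 0 1)"
  unfolding escaping_quadratic_like_def
  using U_nonempty open_U closure_U covering_space_U card_fibre_U holomorphic_on_subset[OF holomorphic]
  by (auto intro!: convex_imp_simply_connected)

lemma periodic_points_U: "{z. periodic_point f U z} = of_real ` {x. periodic_point (real_restr f) UNIV x}"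
  using periodic_point_U_imp_real periodic_point_of_real by blast

end

theorem lemma4p4:
  fixes f :: "complex \<Rightarrow> complex"
  assumes "in_B f"
    and "convex_on UNIV (real_restr f)"
    and "quadratic_like f (ball 0 1) (f ` ball 0 1)"
    and "f 0 \<in> complex_of_real ` {..< -1}"
  shows "escaping_quadratic_like f (f -` ball 0 1 \<inter> ball 0 1) (ball 0 1)
     \<and> {z. periodic_point f (f -` ball 0 1 \<inter> ball 0 1) z}
         = complex_of_real ` {x. periodic_point (real_restr f) UNIV x}"
proof -
  obtain c where "f 0 = of_real c" "c < -1" using assms(4) by auto
  then interpret real_even_quadratic_like f c
    using assms(1-3) unfolding in_B_def by unfold_locales auto
  show ?thesis
    using escaping_quadratic_like_U periodic_points_U unfolding U_def by simp
qed

end
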